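(* Let $T_{i,j,k}$ be the solution of the $T$-system with the $2\times2$ periodic initial data $t_{i,j}$ ($t_{i,j}=a$ if $i,j$ even, $b$ if $i,j$ odd, $c$ if $i$ even and $j$ odd, $d$ if $i$ odd and $j$ even, with $a,b,c,d>0$). For $k\ge1$ and $i+j+k\equiv 0\pmod 2$ let $L_{i,j,k}=\frac{T_{i+1,j,k}T_{i-1,j,k}}{T_{i,j,k+1}T_{i,j,k-1}}$ and $R_{i,j,k}=1-L_{i,j,k}$. Then with $e_1=(2,0,0)$, $e_2=(0,2,0)$, $e_3=(1,1,2)$, $$L_{(i,j,k)+me_1+ne_2+pe_3}=L_{i,j,k},\qquad R_{(i,j,k)+me_1+ne_2+pe_3}=R_{i,j,k}$$ for all $m,n\in\mathbb{Z}$, $p\ge0$.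
   Context: The $T$-system is $T_{i,j,k+1}T_{i,j,k-1}=T_{i+1,j,k}T_{i-1,j,k}+T_{i,j+1,k}T_{i,j-1,k}$ for $k\ge1$, on points $(i,j,k)\in\mathbb{Z}^2\times\mathbb{Z}_{\ge0}$ with $i+j+k\equiv 1\pmod 2$, with initial data $T_{i,j,(i+j+1\bmod 2)}=t_{i,j}$. One has $R_{i,j,k}=\frac{T_{i,j+1,k}T_{i,j-1,k}}{T_{i,j,k+1}T_{i,j,k-1}}$ by the $T$-system. *)

theory Defs
  imports Complex_Main
begin

text \<open>Only values at lattice points
  (i,j,k) with i+j+k odd are meaningful; the recursion on such points only
  involves lattice points. Initial data: T(i,j,0) = t(i,j) for i+j odd and
  T(i,j,1) = t(i,j) for i+j even, i.e. T(i,j,(i+j+1) mod 2) = t(i,j).\<close>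
fun Tsys :: "(int \<Rightarrow> int \<Rightarrow> real) \<Rightarrow> int \<Rightarrow> int \<Rightarrow> nat \<Rightarrow> real" where
  "Tsys t i j 0 = t i j"
| "Tsys t i j (Suc 0) = t i j"
| "Tsys t i j (Suc (Suc k)) =
     (Tsys t (i+1) j (Suc k) * Tsys t (i-1) j (Suc k)
      + Tsys t i (j+1) (Suc k) * Tsys t i (j-1) (Suc k)) / Tsys t i j k"

definition tper :: "real \<Rightarrow> real \<Rightarrow> real \<Rightarrow> real \<Rightarrow> int \<Rightarrow> int \<Rightarrow> real" where
  "tper a b c d i j =
     (if even i \<and> even j then a
      else if odd i \<and> odd j then b
      else if even i \<and> odd j then c
      else d)"

definition Lsys :: "(int \<Rightarrow> int \<Rightarrow> real) \<Rightarrow> int \<Rightarrow> int \<Rightarrow> nat \<Rightarrow> real" where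
  "Lsys t i j k = (Tsys t (i+1) j k * Tsys t (i-1) j k)
                   / (Tsys t i j (k+1) * Tsys t i j (k-1))"

definition Rsys :: "(int \<Rightarrow> int \<Rightarrow> real) \<Rightarrow> int \<Rightarrow> int \<Rightarrow> nat \<Rightarrow> real" where
  "Rsys t i j k = 1 - Lsys t i j k"

end

theory Submission
  imports Defs
begin

(* For initial data that are positive and 2-periodic in both
   lattice directions, the whole solution T is positive and 2-periodic in i and
   j at every level k (induction along the recursion of Tsys).  Periodicity
   makes the two neighbours in each direction coincide, so the T-system
   collapses to  T(i,j,k+2) T(i,j,k) = T(i+1,j,k+1)^2 + T(i,j+1,k+1)^2.
   Consequently  L(i,j,k) = 1 / (1 + rho(i,j,k)^2)  with the ratio
   rho(i,j,k) = T(i,j+1,k) / T(i+1,j,k), and comparing the collapsed recursion at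
   the two points (i+1,j,k+1) and (i,j+1,k+1) shows that rho is invariant under
   the shift (1,1,2).  Invariance under (2,0,0) and (0,2,0) is immediate from
   periodicity, so L, and hence R = 1 - L, is invariant under the whole
   semigroup generated by e1, e2, e3.  The 2x2 periodic data tper is an
   instance. *)

definition two_periodic :: "(int \<Rightarrow> int \<Rightarrow> real) \<Rightarrow> bool" where
  "two_periodic t \<longleftrightarrow>
     (\<forall>i i' j j'. i mod 2 = i' mod 2 \<longrightarrow> j mod 2 = j' mod 2 \<longrightarrow> t i j = t i' j')"

lemma Tsys_pos:
  assumes "\<forall>i j. t i j > 0"
  shows "Tsys t i j k > 0"
  using assms
proof (induction t i j k rule: Tsys.induct)
  case (3 t i j k)
  have "0 < (Tsys t (i+1) j (Suc k) * Tsys t (i-1) j (Suc k)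
             + Tsys t i (j+1) (Suc k) * Tsys t i (j-1) (Suc k)) / Tsys t i j k"
    using 3 by (intro divide_pos_pos add_pos_pos mult_pos_pos) auto
  then show ?case by (simp only: Tsys.simps)
qed simp_all

lemma Tsys_two_periodic:
  assumes "two_periodic t" and "i mod 2 = i' mod 2" and "j mod 2 = j' mod 2"
  shows "Tsys t i j k = Tsys t i' j' k"
  using assms
proof (induction t i j k arbitrary: i' j' rule: Tsys.induct)
  case (1 t i j)
  then have "t i j = t i' j'" unfolding two_periodic_def by blast
  then show ?case by (simp only: Tsys.simps)
next
  case (2 t i j)
  then have "t i j = t i' j'" unfolding two_periodic_def by blast
  then show ?case by (simp only: Tsys.simps)
next
  case (3 t i j k)
  note per = "3.prems"(1) and pi = "3.prems"(2) and pj = "3.prems"(3)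
  have pi': "(i+1) mod 2 = (i'+1) mod 2" "(i-1) mod 2 = (i'-1) mod 2"
    using pi by presburger+
  have pj': "(j+1) mod 2 = (j'+1) mod 2" "(j-1) mod 2 = (j'-1) mod 2"
    using pj by presburger+
  have "Tsys t (i+1) j (Suc k) = Tsys t (i'+1) j' (Suc k)"
    by (rule "3.IH"(1)[OF per pi'(1) pj])
  moreover have "Tsys t (i-1) j (Suc k) = Tsys t (i'-1) j' (Suc k)"
    by (rule "3.IH"(2)[OF per pi'(2) pj])
  moreover have "Tsys t i (j+1) (Suc k) = Tsys t i' (j'+1) (Suc k)"
    by (rule "3.IH"(3)[OF per pi pj'(1)])
  moreover have "Tsys t i (j-1) (Suc k) = Tsys t i' (j'-1) (Suc k)"
    by (rule "3.IH"(4)[OF per pi pj'(2)])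
  moreover have "Tsys t i j k = Tsys t i' j' k"
    by (rule "3.IH"(5)[OF per pi pj])
  ultimately show ?case by (simp only: Tsys.simps)
qed

locale periodic_T_system =
  fixes t :: "int \<Rightarrow> int \<Rightarrow> real"
  assumes t_pos: "\<forall>i j. t i j > 0"
    and t_periodic: "two_periodic t"
begin

abbreviation T :: "int \<Rightarrow> int \<Rightarrow> nat \<Rightarrow> real" where
  "T \<equiv> Tsys t"

lemma T_pos: "T i j k > 0"
  by (rule Tsys_pos[OF t_pos])

lemma T_mod2: "i mod 2 = i' mod 2 \<Longrightarrow> j mod 2 = j' mod 2 \<Longrightarrow> T i j k = T i' j' k"
  using Tsys_two_periodic t_periodic by blast

text \<open>The T-system collapses to a sum of two squares, since the neighbours
  at i+1 and i-1 (resp. j+1 and j-1) coincide.\<close>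
lemma T_step: "T i j (k+2) * T i j k = T (i+1) j (k+1)^2 + T i (j+1) (k+1)^2"
proof -
  have "T (i-1) j (k+1) = T (i+1) j (k+1)" "T i (j-1) (k+1) = T i (j+1) (k+1)"
    by (rule T_mod2; presburger)+
  moreover have "T i j (k+2) * T i j k =
     T (i+1) j (k+1) * T (i-1) j (k+1) + T i (j+1) (k+1) * T i (j-1) (k+1)"
    using T_pos[of i j k] by (simp add: numeral_2_eq_2)
  ultimately show ?thesis by (simp add: power2_eq_square)
qed

text \<open>The collapsed recursion at (i+1,j) and at (i,j+1) has the same right-hand
  side, which yields a conserved product.\<close>
lemma T_cross: "T (i+1) j (k+2) * T (i+1) j k = T i (j+1) (k+2) * T i (j+1) k"
proof -
  have "T (i+2) j (k+1) = T i j (k+1)" "T i (j+2) (k+1) = T i j (k+1)"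
    by (rule T_mod2; presburger)+
  then show ?thesis
    using T_step[of "i+1" j k] T_step[of i "j+1" k] by (simp add: add.assoc)
qed

definition rho :: "int \<Rightarrow> int \<Rightarrow> nat \<Rightarrow> real" where
  "rho i j k = T i (j+1) k / T (i+1) j k"

lemma L_via_rho:
  assumes "k \<ge> 1"
  shows "Lsys t i j k = 1 / (1 + rho i j k ^ 2)"
proof -
  obtain k' where k: "k = k' + 1" using assms by (metis add.commute le_add_diff_inverse)
  have "T (i-1) j k = T (i+1) j k" by (rule T_mod2) presburger+
  moreover have "T i j (k+1) * T i j (k-1) = T (i+1) j k ^ 2 + T i (j+1) k ^ 2"
    using T_step[of i j k'] k by simp
  ultimately have "Lsys t i j k = T (i+1) j k ^ 2 / (T (i+1) j k ^ 2 + T i (j+1) k ^ 2)"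
    by (simp add: Lsys_def power2_eq_square)
  then show ?thesis
    using T_pos[of "i+1" j k] by (simp add: rho_def field_simps)
qed

lemma rho_shift_e3: "rho (i+1) (j+1) (k+2) = rho i j k"
proof -
  have "T (i+1) (j+2) (k+2) = T (i+1) j (k+2)" "T (i+2) (j+1) (k+2) = T i (j+1) (k+2)"
    by (rule T_mod2; presburger)+
  then have "rho (i+1) (j+1) (k+2) = T (i+1) j (k+2) / T i (j+1) (k+2)"
    by (simp add: rho_def add.assoc)
  also have "\<dots> = T i (j+1) k / T (i+1) j k"
    using T_cross[of i j k] T_pos[of i "j+1" "k+2"] T_pos[of "i+1" j k]
    by (simp only: frac_eq_eq less_irrefl mult.commute not_False_eq_True)
  finally show ?thesis by (simp add: rho_def)
qed

lemma L_shift_e3_iter: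
  assumes "k \<ge> 1"
  shows "Lsys t (i + int p) (j + int p) (k + 2*p) = Lsys t i j k"
proof (induction p)
  case (Suc p)
  have "rho (i + int (Suc p)) (j + int (Suc p)) (k + 2 * Suc p) = rho (i + int p) (j + int p) (k + 2*p)"
    using rho_shift_e3[of "i + int p" "j + int p" "k + 2*p"] by (simp add: algebra_simps)
  with Suc.IH show ?case using assms by (simp add: L_via_rho)
qed simp

lemma L_shift_e1_e2: "Lsys t (i + 2*m) (j + 2*n) k = Lsys t i j k"
proof -
  have "T (i+2*m+1) (j+2*n) k = T (i+1) j k" "T (i+2*m-1) (j+2*n) k = T (i-1) j k"
       "\<And>k'. T (i+2*m) (j+2*n) k' = T i j k'"
    by (rule T_mod2; presburger)+
  then show ?thesis by (simp add: Lsys_def)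
qed

theorem L_shift:
  assumes "k \<ge> 1"
  shows "Lsys t (i + 2*m + int p) (j + 2*n + int p) (k + 2*p) = Lsys t i j k"
  using L_shift_e1_e2[of "i + int p" m "j + int p" n "k + 2*p"] L_shift_e3_iter[OF assms]
  by (simp add: ac_simps)

end

lemma tper_pos: "a > 0 \<Longrightarrow> b > 0 \<Longrightarrow> c > 0 \<Longrightarrow> d > 0 \<Longrightarrow> \<forall>i j. tper a b c d i j > 0"
  by (simp add: tper_def)

lemma tper_two_periodic: "two_periodic (tper a b c d)"
  unfolding two_periodic_def
proof (intro allI impI)
  fix i i' j j' :: int
  assume "i mod 2 = i' mod 2" "j mod 2 = j' mod 2"
  then have "even i = even i'" "even j = even j'"
    by (metis even_iff_mod_2_eq_zero)+
  then show "tper a b c d i j = tper a b c d i' j'"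
    unfolding tper_def by (simp only:)
qed

theorem mainTheorem4:
  fixes a b c d :: real and i j m n :: int and k p :: nat
  assumes "a > 0" "b > 0" "c > 0" "d > 0"
    and "k \<ge> 1" and "even (i + j + int k)"
  shows "Lsys (tper a b c d) (i + 2*m + int p) (j + 2*n + int p) (k + 2*p)
           = Lsys (tper a b c d) i j k
       \<and> Rsys (tper a b c d) (i + 2*m + int p) (j + 2*n + int p) (k + 2*p)
           = Rsys (tper a b c d) i j k"
proof -
  interpret periodic_T_system "tper a b c d"
    by (rule periodic_T_system.intro[OF tper_pos[OF assms(1-4)] tper_two_periodic])
  have "Lsys (tper a b c d) (i + 2*m + int p) (j + 2*n + int p) (k + 2*p)
          = Lsys (tper a b c d) i j k"
    using L_shift assms(5) .
  then show ?thesis by (simp add: Rsys_def)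
qed

end
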